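(* Let $M\subset\bigoplus_{i=1}^rA[-\delta_i]$ be a graded right $A$-submodule and $M'=L(M)$. For every $d\ge0$, $\iota(M_d)=M'(d)_d$, where $M'(d)=M'\cap\bigoplus_iS(\delta_i,d)[-\delta_i]$ (the set of elements $\sum_ie'_ih_i$ of $M'$ with $h_i\in S(\delta_i,d)$). In particular $\dim_{\mathbb K}M_d=\dim_{\mathbb K}M'(d)_d$.
   Context: Let $\mathbb K$ be a field, $F=\mathbb K\langle x_1,\dots,x_n\rangle$ with standard grading, $I\subset F$ a graded two-sided ideal, $A=F/I$, $A[-\delta]_d=A_{d-\delta}$, $\bigoplus_{i=1}^rA[-\delta_i]$ the graded free right $A$-module with basis $e_i$ of degree $\delta_i$. Let $P=\mathbb K[x_{ij}\mid1\le i\le n,j\ge1]$ (commutative, $\deg x_{ij}=1$), $Q$ the ideal generated by all $x_{ij}x_{kj}$, $R=P/Q$, $\sigma:x_{ij}\mapsto x_{i,j+1}$, $\iota:F\to R$ the $\mathbb K$-linear map $x_{i_1}\cdots x_{i_d}\mapsto x_{i_11}\cdots x_{i_dd}$, $J$ the ideal of $R$ generated by $\bigcup_{k\ge0}\sigma^k(\iota(I))$, $S=R/J$ (with induced $\sigma$ and induced injective graded linear $\iota:A\to S$). For integers $0\le\delta\le d$, $S(\delta,d)$ is the subalgebra of $S$ generated by the cosets of $x_{ij}$ with $1\le i\le n$, $\delta<j\le d$. $\bigoplus_iS[-\delta_i]$ is the graded free $S$-module with basis $e'_i$ of degree $\delta_i$, and $\iota:\bigoplus_iA[-\delta_i]\to\bigoplus_iS[-\delta_i]$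 is the $\mathbb K$-linear map $e_if\mapsto e'_i\sigma^{\delta_i}(\iota(f))$. For a graded right submodule $M$, its letterplace analogue $L(M)$ is the $S$-submodule of $\bigoplus_iS[-\delta_i]$ generated by $\iota(M)$. *)

theory Defs
  imports Complex_Main "HOL-Library.Poly_Mapping" "HOL-Library.Function_Algebras"
begin

text \<open>Letters x_1..x_n are the elements of a finite type 'a (n = CARD('a)).
 Noncommutative polynomials F = K<x_1..x_n>: finitely supported maps from words to K.\<close>
type_synonym ('a,'k) ncpoly = "'a list \<Rightarrow>\<^sub>0 'k"

text \<open>Commutative polynomials P = K[x_ij]: finitely supported maps from monomials
 (finitely supported exponent maps on variables (i,j)) to K.
 Column indices are 0-based: the pair (i,j) stands for the paper's variable x_{i,j+1}.\<close>
type_synonym ('a,'k) lppoly = "(('a \<times> nat) \<Rightarrow>\<^sub>0 nat) \<Rightarrow>\<^sub>0 'k"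

definition ncmul :: "('a,'k::field) ncpoly \<Rightarrow> ('a,'k) ncpoly \<Rightarrow> ('a,'k) ncpoly" where
  "ncmul f g = (\<Sum>u\<in>Poly_Mapping.keys f. \<Sum>v\<in>Poly_Mapping.keys g. Poly_Mapping.single (u @ v) (Poly_Mapping.lookup f u * Poly_Mapping.lookup g v))"

definition nc_scale :: "'k::field \<Rightarrow> ('b \<Rightarrow> ('a,'k) ncpoly) \<Rightarrow> ('b \<Rightarrow> ('a,'k) ncpoly)" where
  "nc_scale c m = (\<lambda>i. Poly_Mapping.map ((*) c) (m i))"

text \<open>f is homogeneous of degree e (e an integer; negative e forces f = 0).\<close>
definition nc_homog :: "int \<Rightarrow> ('a,'k::field) ncpoly \<Rightarrow> bool" where
  "nc_homog e f \<longleftrightarrow> (\<forall>w\<in>Poly_Mapping.keys f. int (length w) = e)"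

definition nc_part :: "nat \<Rightarrow> ('a,'k::field) ncpoly \<Rightarrow> ('a,'k) ncpoly" where
  "nc_part d f = (\<Sum>w\<in>{w\<in>Poly_Mapping.keys f. length w = d}. Poly_Mapping.single w (Poly_Mapping.lookup f w))"

definition graded_two_sided_ideal :: "('a,'k::field) ncpoly set \<Rightarrow> bool" where
  "graded_two_sided_ideal I \<longleftrightarrow>
     0 \<in> I \<and> (\<forall>f\<in>I. \<forall>g\<in>I. f + g \<in> I) \<and>
     (\<forall>f\<in>I. \<forall>g. ncmul g f \<in> I \<and> ncmul f g \<in> I) \<and>
     (\<forall>f\<in>I. \<forall>d. nc_part d f \<in> I)"

text \<open>Elements of the free module over F with basis e_i (i :: 'b, deg e_i = \<delta> i) are tuples
 m :: 'b \<Rightarrow> F standing for \<Sum>_i e_i m_i.\<close>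
definition mod_homog :: "('b \<Rightarrow> nat) \<Rightarrow> nat \<Rightarrow> ('b \<Rightarrow> ('a,'k::field) ncpoly) \<Rightarrow> bool" where
  "mod_homog \<delta> d m \<longleftrightarrow> (\<forall>i. nc_homog (int d - int (\<delta> i)) (m i))"

definition mod_part :: "('b \<Rightarrow> nat) \<Rightarrow> nat \<Rightarrow> ('b \<Rightarrow> ('a,'k::field) ncpoly) \<Rightarrow> ('b \<Rightarrow> ('a,'k) ncpoly)" where
  "mod_part \<delta> d m = (\<lambda>i. if \<delta> i \<le> d then nc_part (d - \<delta> i) (m i) else 0)"

text \<open>A graded right A-submodule M of \<Oplus>_i A[-\<delta>_i] (A = F/I) is represented by its full
 preimage M~ in \<Oplus>_i F[-\<delta>_i]: a graded right F-submodule containing \<Oplus>_i I.\<close>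
definition graded_right_submodule_pre ::
  "('a,'k::field) ncpoly set \<Rightarrow> ('b \<Rightarrow> nat) \<Rightarrow> ('b \<Rightarrow> ('a,'k) ncpoly) set \<Rightarrow> bool" where
  "graded_right_submodule_pre I \<delta> M \<longleftrightarrow>
     (\<forall>m. (\<forall>i. m i \<in> I) \<longrightarrow> m \<in> M) \<and>
     (\<forall>m\<in>M. \<forall>m'\<in>M. (\<lambda>i. m i + m' i) \<in> M) \<and>
     (\<forall>m\<in>M. \<forall>g. (\<lambda>i. ncmul (m i) g) \<in> M) \<and>
     (\<forall>m\<in>M. \<forall>d. mod_part \<delta> d m \<in> M)"

definition lp_var :: "'a \<Rightarrow> nat \<Rightarrow> ('a,'k::field) lppoly" where
  "lp_var i j = Poly_Mapping.single (Poly_Mapping.single (i,j) 1) 1"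

text \<open>\<iota>: x_{i_1}...x_{i_d} \<mapsto> x_{i_1,1}...x_{i_d,d} (0-based columns 0..d-1 here).\<close>
definition lp_iota :: "('a,'k::field) ncpoly \<Rightarrow> ('a,'k) lppoly" where
  "lp_iota f = (\<Sum>w\<in>Poly_Mapping.keys f.
      Poly_Mapping.single (\<Sum>k<length w. Poly_Mapping.single (w!k, k) 1) (Poly_Mapping.lookup f w))"

definition lp_shift_mon :: "(('a \<times> nat) \<Rightarrow>\<^sub>0 nat) \<Rightarrow> (('a \<times> nat) \<Rightarrow>\<^sub>0 nat)" where
  "lp_shift_mon m = (\<Sum>ij\<in>Poly_Mapping.keys m. Poly_Mapping.single (fst ij, Suc (snd ij)) (Poly_Mapping.lookup m ij))"

definition lp_sigma :: "('a,'k::field) lppoly \<Rightarrow> ('a,'k) lppoly" where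
  "lp_sigma p = (\<Sum>m\<in>Poly_Mapping.keys p. Poly_Mapping.single (lp_shift_mon m) (Poly_Mapping.lookup p m))"

definition ideal_gen :: "('a,'k::field) lppoly set \<Rightarrow> ('a,'k) lppoly set" where
  "ideal_gen G = module.span (*) G"

text \<open>Kernel of P \<rightarrow> S = R/J = P/(Q + ideal generated by lifts of \<sigma>^k(\<iota>(I))).\<close>
definition lp_Kideal :: "('a,'k::field) ncpoly set \<Rightarrow> ('a,'k) lppoly set" where
  "lp_Kideal I = ideal_gen ({lp_var i j * lp_var k j | i k j. True} \<union>
                            (\<Union>k. (lp_sigma ^^ k) ` lp_iota ` I))"

definition mdeg :: "(('a \<times> nat) \<Rightarrow>\<^sub>0 nat) \<Rightarrow> nat" where
  "mdeg m = (\<Sum>v\<in>Poly_Mapping.keys m. Poly_Mapping.lookup m v)"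

definition lp_homog :: "int \<Rightarrow> ('a,'k::field) lppoly \<Rightarrow> bool" where
  "lp_homog e p \<longleftrightarrow> (\<forall>m\<in>Poly_Mapping.keys p. int (mdeg m) = e)"

text \<open>p is a polynomial in the variables x_{i,j} with \<delta> < j \<le> d (paper indexing),
 i.e. 0-based columns \<delta> \<le> j < d.\<close>
definition lp_in_vars :: "nat \<Rightarrow> nat \<Rightarrow> ('a,'k::field) lppoly \<Rightarrow> bool" where
  "lp_in_vars \<delta> d p \<longleftrightarrow> (\<forall>m\<in>Poly_Mapping.keys p. \<forall>ij\<in>Poly_Mapping.keys m. \<delta> \<le> snd ij \<and> snd ij < d)"

definition lp_scale :: "'k::field \<Rightarrow> ('b \<Rightarrow> ('a,'k) lppoly) \<Rightarrow> ('b \<Rightarrow> ('a,'k) lppoly)" where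
  "lp_scale c h = (\<lambda>i. Poly_Mapping.map ((*) c) (h i))"

definition lp_iota_mod :: "('b \<Rightarrow> nat) \<Rightarrow> ('b \<Rightarrow> ('a,'k::field) ncpoly) \<Rightarrow> ('b \<Rightarrow> ('a,'k) lppoly)" where
  "lp_iota_mod \<delta> m = (\<lambda>i. (lp_sigma ^^ \<delta> i) (lp_iota (m i)))"

text \<open>Preimage in \<Oplus>_i P of \<iota>(M_d) \<subseteq> \<Oplus>_i S[-\<delta>_i].\<close>
definition iota_Md_pre ::
  "('a,'k::field) ncpoly set \<Rightarrow> ('b \<Rightarrow> nat) \<Rightarrow> ('b \<Rightarrow> ('a,'k) ncpoly) set \<Rightarrow> nat \<Rightarrow> ('b \<Rightarrow> ('a,'k) lppoly) set" where
  "iota_Md_pre I \<delta> M d =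
     {h. \<exists>m\<in>M. mod_homog \<delta> d m \<and> (\<forall>i. h i - lp_iota_mod \<delta> m i \<in> lp_Kideal I)}"

text \<open>Preimage in \<Oplus>_i P of M' = L(M), the S-submodule generated by \<iota>(M).\<close>
definition L_pre ::
  "('a,'k::field) ncpoly set \<Rightarrow> ('b \<Rightarrow> nat) \<Rightarrow> ('b \<Rightarrow> ('a,'k) ncpoly) set \<Rightarrow> ('b \<Rightarrow> ('a,'k) lppoly) set" where
  "L_pre I \<delta> M =
     {h. \<exists>g\<in>module.span (\<lambda>p v. (\<lambda>i. p * v i)) (lp_iota_mod \<delta> ` M).
           \<forall>i. h i - g i \<in> lp_Kideal I}"

text \<open>Preimage of M'(d)_d: elements of M' whose components h_i lie in S(\<delta>_i,d) and which are
 homogeneous of degree d, i.e. h_i \<in> S_{d-\<delta>_i} (h_i = 0 if d < \<delta>_i).\<close>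
definition Lcut_pre ::
  "('a,'k::field) ncpoly set \<Rightarrow> ('b \<Rightarrow> nat) \<Rightarrow> ('b \<Rightarrow> ('a,'k) ncpoly) set \<Rightarrow> nat \<Rightarrow> ('b \<Rightarrow> ('a,'k) lppoly) set" where
  "Lcut_pre I \<delta> M d =
     {h \<in> L_pre I \<delta> M. \<forall>i.
        (\<exists>p. lp_in_vars (\<delta> i) d p \<and> h i - p \<in> lp_Kideal I) \<and>
        (\<exists>q. lp_homog (int d - int (\<delta> i)) q \<and> h i - q \<in> lp_Kideal I)}"

text \<open>K-dimension of (V + W)/W, via maximal size of subsets of V linearly independent modulo W.\<close>
definition indep_mod :: "('k::field \<Rightarrow> 'v \<Rightarrow> 'v) \<Rightarrow> 'v::ab_group_add set \<Rightarrow> 'v set \<Rightarrow> bool" where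
  "indep_mod sc W B \<longleftrightarrow> finite B \<and> (\<forall>c. (\<Sum>b\<in>B. sc (c b) b) \<in> W \<longrightarrow> (\<forall>b\<in>B. c b = 0))"

definition dim_mod :: "('k::field \<Rightarrow> 'v \<Rightarrow> 'v) \<Rightarrow> 'v::ab_group_add set \<Rightarrow> 'v set \<Rightarrow> nat" where
  "dim_mod sc V W = Sup {card B | B. B \<subseteq> V \<and> indep_mod sc W B}"

end

theory Submission
  imports Defs
begin

text \<open>
  The reading map \<open>lp_read \<delta>\<close>, which reads a letterplace monomial starting in column \<delta>
  back as a word and kills every other monomial, is a left inverse of \<open>\<sigma>\<^sup>\<delta> \<circ> \<iota>\<close> and maps the
  ideal \<open>K = Q + (\<sigma>\<^sup>k(\<iota>(I)))\<^sub>k\<close> into \<open>I\<close>: a monomial divisible by some \<open>x\<^sub>a\<^sub>j x\<^sub>b\<^sub>j\<close> is never a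
  word, and a monomial multiple of \<open>\<sigma>\<^sup>k(\<iota>(f))\<close> with \<open>f\<close> homogeneous is read either as \<open>0\<close> or
  as a two-sided multiple of \<open>f\<close>. Applied componentwise, reading maps \<open>L(M)\<close> into \<open>M\<close>.
  Conversely, \<open>K\<close> is a homogeneous ideal, and by pigeonhole every monomial of degree \<open>d - \<delta>\<close>
  in the columns \<open>\<delta>, \<dots>, d - 1\<close> is either a word or lies in \<open>Q\<close>; hence every element of
  \<open>M'(d)\<^sub>d\<close> is congruent modulo \<open>K\<close> to \<open>\<iota>\<close> of the reading of a homogeneous representative,
  which lies in \<open>M\<^sub>d\<close>. The two maps then transfer families that are linearly independent
  modulo \<open>I\<close> and modulo \<open>K\<close> in both directions, which gives the equality of dimensions.
\<close>

lemma sum_fun_apply: "(\<Sum>a\<in>A. f a) x = (\<Sum>a\<in>A. f a x)"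
  by (induction A rule: infinite_finite_induct) auto

lemma sum_mem_add_closed:
  "0 \<in> S \<Longrightarrow> (\<And>a b. a \<in> S \<Longrightarrow> b \<in> S \<Longrightarrow> a + b \<in> S) \<Longrightarrow> (\<And>x. x \<in> A \<Longrightarrow> f x \<in> S)
   \<Longrightarrow> (\<Sum>x\<in>A. f x) \<in> S"
  by (induction A rule: infinite_finite_induct) auto

lemma lookup_map_mult:
  "Poly_Mapping.lookup (Poly_Mapping.map ((*) a) p) k = (a::'c::mult_zero) * Poly_Mapping.lookup p k"
  by (simp add: Poly_Mapping.map.rep_eq when_def)

lemma poly_mapping_sum_single: "p = (\<Sum>k\<in>Poly_Mapping.keys p. Poly_Mapping.single k (Poly_Mapping.lookup p k))"
  by (rule poly_mapping_eqI)
     (simp add: lookup_sum lookup_single when_def in_keys_iff sum.delta' split: if_splits)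

lemma module_pointwise_mult: "module (\<lambda>(r::'r::comm_ring_1) (v::'b \<Rightarrow> 'r) i. r * v i)"
  by standard (simp_all add: fun_eq_iff distrib_left distrib_right mult.assoc)

lemma module_pointwise_map_mult:
  "module (\<lambda>(c::'k::comm_ring_1) (m::'b \<Rightarrow> 'i \<Rightarrow>\<^sub>0 'k) i. Poly_Mapping.map ((*) c) (m i))"
  by standard (simp_all add: fun_eq_iff poly_mapping_eq_iff lookup_map_mult lookup_add distrib_left distrib_right mult.assoc)

definition lin_ext :: "('i \<Rightarrow> 'c::zero \<Rightarrow> 'v::comm_monoid_add) \<Rightarrow> ('i \<Rightarrow>\<^sub>0 'c) \<Rightarrow> 'v" where
  "lin_ext \<phi> f = (\<Sum>i\<in>Poly_Mapping.keys f. \<phi> i (Poly_Mapping.lookup f i))"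

lemma lin_ext_superset:
  assumes "finite S" "Poly_Mapping.keys f \<subseteq> S" "\<And>i. \<phi> i 0 = 0"
  shows "lin_ext \<phi> f = (\<Sum>i\<in>S. \<phi> i (Poly_Mapping.lookup f i))"
  unfolding lin_ext_def
  by (rule sum.mono_neutral_left) (use assms in \<open>auto simp: in_keys_iff\<close>)

lemma lin_ext_zero [simp]: "lin_ext \<phi> 0 = 0"
  by (simp add: lin_ext_def)

lemma lin_ext_single: "\<phi> i 0 = 0 \<Longrightarrow> lin_ext \<phi> (Poly_Mapping.single i c) = \<phi> i c"
  by (cases "c = 0") (auto simp: lin_ext_def)

lemma lin_ext_cong:
  "(\<And>i. i \<in> Poly_Mapping.keys f \<Longrightarrow> \<phi> i (Poly_Mapping.lookup f i) = \<psi> i (Poly_Mapping.lookup f i))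
   \<Longrightarrow> lin_ext \<phi> f = lin_ext \<psi> f"
  unfolding lin_ext_def by (rule sum.cong[OF refl])

lemma lin_ext_single_id: "lin_ext Poly_Mapping.single f = f"
  using poly_mapping_sum_single[of f] by (simp add: lin_ext_def)

lemma lin_ext_hom:
  assumes "H 0 = 0" "\<And>a b. H (a + b) = H a + H b"
  shows "H (lin_ext \<phi> f) = lin_ext (\<lambda>i c. H (\<phi> i c)) f"
  unfolding lin_ext_def by (rule sum_comp_morphism[OF assms, unfolded o_def, symmetric])

lemma keys_lin_ext:
  "(\<And>i c. Poly_Mapping.keys (\<phi> i c) \<subseteq> X i) \<Longrightarrow> Poly_Mapping.keys (lin_ext \<phi> f) \<subseteq> (\<Union>i\<in>Poly_Mapping.keys f. X i)"
  unfolding lin_ext_def using keys_sum by fastforce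

context
  fixes \<phi> :: "'i \<Rightarrow> 'c::comm_monoid_add \<Rightarrow> 'v::comm_monoid_add"
  assumes \<phi>_zero: "\<And>i. \<phi> i 0 = 0" and \<phi>_add: "\<And>i a b. \<phi> i (a + b) = \<phi> i a + \<phi> i b"
begin

lemma lin_ext_add: "lin_ext \<phi> (f + g) = lin_ext \<phi> f + lin_ext \<phi> g"
proof -
  let ?S = "Poly_Mapping.keys f \<union> Poly_Mapping.keys g"
  have "lin_ext \<phi> (f + g) = (\<Sum>i\<in>?S. \<phi> i (Poly_Mapping.lookup f i)) + (\<Sum>i\<in>?S. \<phi> i (Poly_Mapping.lookup g i))"
    using keys_add[of f g] by (simp add: lin_ext_superset[where S = ?S] \<phi>_zero lookup_add \<phi>_add sum.distrib)
  then show ?thesis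
    by (simp add: lin_ext_superset[where S = ?S] \<phi>_zero)
qed

lemma lin_ext_sum: "lin_ext \<phi> (\<Sum>x\<in>A. f x) = (\<Sum>x\<in>A. lin_ext \<phi> (f x))"
  by (induction A rule: infinite_finite_induct) (auto simp: lin_ext_add)

end

lemma lin_ext_diff:
  fixes \<phi> :: "'i \<Rightarrow> 'c::ab_group_add \<Rightarrow> 'v::ab_group_add"
  assumes "\<And>i. \<phi> i 0 = 0" "\<And>i a b. \<phi> i (a + b) = \<phi> i a + \<phi> i b"
  shows "lin_ext \<phi> (f - g) = lin_ext \<phi> f - lin_ext \<phi> g"
  using lin_ext_add[of \<phi> "f - g" g, OF assms] by (simp add: algebra_simps)

lemma lin_ext_scale:
  fixes \<phi> :: "'i \<Rightarrow> 'c::mult_zero \<Rightarrow> 'v::comm_monoid_add"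
  shows "(\<And>i. \<phi> i 0 = 0) \<Longrightarrow> lin_ext \<phi> (Poly_Mapping.map ((*) a) f) = lin_ext (\<lambda>i x. \<phi> i (a * x)) f"
  by (subst lin_ext_superset[where S = "Poly_Mapping.keys f"])
     (auto simp: lin_ext_def lookup_map_mult in_keys_iff)

lemma ncmul_single_right:
  "ncmul f (Poly_Mapping.single v c) = lin_ext (\<lambda>w a. Poly_Mapping.single (w @ v) (a * c)) f"
  unfolding ncmul_def lin_ext_def by (rule sum.cong) (simp_all add: lin_ext_single[unfolded lin_ext_def])

lemma ncmul_single_left:
  "ncmul (Poly_Mapping.single u c) g = lin_ext (\<lambda>w b. Poly_Mapping.single (u @ w) (c * b)) g"
  by (cases "c = 0") (simp_all add: ncmul_def lin_ext_def)

lemma nc_part_eq_lin_ext: "nc_part d f = lin_ext (\<lambda>w c. if length w = d then Poly_Mapping.single w c else 0) f"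
  unfolding nc_part_def lin_ext_def by (simp add: sum.inter_filter)

lemma lookup_nc_part:
  "Poly_Mapping.lookup (nc_part d f) w = (if length w = d then Poly_Mapping.lookup f w else 0)"
  by (auto simp: nc_part_def lookup_sum lookup_single when_def in_keys_iff sum.If_cases)

lemma keys_nc_part: "w \<in> Poly_Mapping.keys (nc_part e f) \<Longrightarrow> length w = e"
  by (simp add: in_keys_iff lookup_nc_part split: if_splits)

lemma sum_nc_part: "(\<Sum>e\<in>length ` Poly_Mapping.keys f. nc_part e f) = f"
  by (rule poly_mapping_eqI)
     (auto simp: lookup_sum lookup_nc_part in_keys_iff intro: sum.neutral)

lemma ncmul_nc_part_single:
  "ncmul (nc_part t f) (Poly_Mapping.single B c) =
     lin_ext (\<lambda>w x. if length w = t then Poly_Mapping.single (w @ B) (x * c) else 0) f"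
  unfolding ncmul_single_right nc_part_eq_lin_ext
  by (subst lin_ext_hom[where H = "lin_ext (\<lambda>w a. Poly_Mapping.single (w @ B) (a * c))"])
     (auto simp: single_add distrib_right lin_ext_single intro!: lin_ext_add lin_ext_cong)

section \<open>Letterplace monomials\<close>

(* \<sigma>\<^sup>\<delta>(\<iota>(w)) for a word w *)
definition lp_mon :: "nat \<Rightarrow> 'a list \<Rightarrow> ('a \<times> nat) \<Rightarrow>\<^sub>0 nat" where
  "lp_mon \<delta> w = (\<Sum>k<length w. Poly_Mapping.single (w!k, \<delta>+k) 1)"

lemma lookup_lp_mon:
  "Poly_Mapping.lookup (lp_mon \<delta> w) (x, j) = (if \<delta> \<le> j \<and> j < \<delta> + length w \<and> w!(j-\<delta>) = x then 1 else 0)"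
proof -
  have "((w!k, \<delta>+k) = (x, j)) \<longleftrightarrow> k = j - \<delta> \<and> \<delta> \<le> j \<and> w!(j-\<delta>) = x" for k
    by auto
  then have "Poly_Mapping.lookup (lp_mon \<delta> w) (x, j) =
      (\<Sum>k<length w. if k = j - \<delta> then (if \<delta> \<le> j \<and> w!(j-\<delta>) = x then 1 else 0) else 0)"
    unfolding lp_mon_def lookup_sum lookup_single when_def by (intro sum.cong) auto
  also have "\<dots> = (if \<delta> \<le> j \<and> j < \<delta> + length w \<and> w!(j-\<delta>) = x then 1 else 0)"
    by (cases "\<delta> \<le> j") (simp_all add: less_diff_conv2 add.commute)
  finally show ?thesis .
qed

lemma lookup_lp_mon_le_1: "Poly_Mapping.lookup (lp_mon \<delta> w) p \<le> 1"
  by (cases p) (simp only: lookup_lp_mon, simp)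

lemma lookup_lp_mon_nonzero:
  "Poly_Mapping.lookup (lp_mon \<delta> w) (x, j) \<noteq> 0 \<longleftrightarrow> \<delta> \<le> j \<and> j < \<delta> + length w \<and> w!(j-\<delta>) = x"
  by (simp only: lookup_lp_mon) simp

lemma keys_lp_mon: "Poly_Mapping.keys (lp_mon \<delta> w) = {(w!k, \<delta>+k) | k. k < length w}"
proof (intro set_eqI iffI)
  fix p assume "p \<in> Poly_Mapping.keys (lp_mon \<delta> w)"
  moreover obtain x j where p: "p = (x, j)" by fastforce
  ultimately have "\<delta> \<le> j" "j < \<delta> + length w" "w!(j-\<delta>) = x"
    by (simp_all only: in_keys_iff lookup_lp_mon_nonzero)
  then show "p \<in> {(w!k, \<delta>+k) | k. k < length w}"
    unfolding p by (intro CollectI exI[of _ "j - \<delta>"]) simp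
next
  fix p assume "p \<in> {(w!k, \<delta>+k) | k. k < length w}"
  then obtain k where "k < length w" "p = (w!k, \<delta>+k)" by blast
  then show "p \<in> Poly_Mapping.keys (lp_mon \<delta> w)"
    by (simp only: in_keys_iff lookup_lp_mon_nonzero) simp
qed

lemma lp_mon_Nil [simp]: "lp_mon \<delta> [] = 0"
  by (simp add: lp_mon_def)

lemma lp_mon_singleton: "lp_mon \<delta> [a] = Poly_Mapping.single (a, \<delta>) 1"
  by (simp add: lp_mon_def)

lemma lp_mon_append: "lp_mon \<delta> (a @ b) = lp_mon \<delta> a + lp_mon (\<delta> + length a) b"
proof (rule poly_mapping_eqI)
  fix p :: "'a \<times> nat"
  obtain x j where p: "p = (x, j)" by fastforce
  show "Poly_Mapping.lookup (lp_mon \<delta> (a @ b)) p = Poly_Mapping.lookup (lp_mon \<delta> a + lp_mon (\<delta> + length a) b) p"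
    unfolding p lookup_add lookup_lp_mon by (auto simp: nth_append)
qed

lemma mdeg_zero [simp]: "mdeg 0 = 0"
  by (simp add: mdeg_def)

lemma mdeg_single [simp]: "mdeg (Poly_Mapping.single v n) = n"
  by (cases "n = 0") (simp_all add: mdeg_def)

lemma mdeg_add: "mdeg (a + b) = mdeg a + mdeg b"
proof -
  have "mdeg m = (\<Sum>v\<in>Poly_Mapping.keys a \<union> Poly_Mapping.keys b. Poly_Mapping.lookup m v)"
    if "Poly_Mapping.keys m \<subseteq> Poly_Mapping.keys a \<union> Poly_Mapping.keys b" for m
    unfolding mdeg_def by (rule sum.mono_neutral_left) (use that in \<open>auto simp: in_keys_iff\<close>)
  then show ?thesis
    using keys_add[of a b] by (simp add: lookup_add sum.distrib)
qed

lemma mdeg_lp_mon [simp]: "mdeg (lp_mon \<delta> w) = length w"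
  by (induction w rule: rev_induct) (simp_all add: lp_mon_append mdeg_add lp_mon_singleton)

lemma lp_shift_mon_lp_mon [simp]: "lp_shift_mon (lp_mon \<delta> w) = lp_mon (Suc \<delta>) w"
proof -
  have shift: "lp_shift_mon m = lin_ext (\<lambda>ij n. Poly_Mapping.single (fst ij, Suc (snd ij)) n) m" for m
    by (simp add: lp_shift_mon_def lin_ext_def)
  show ?thesis
    unfolding lp_mon_def shift by (simp add: lin_ext_sum single_add lin_ext_single)
qed

lemma inj_lp_mon: "inj (lp_mon \<delta>)"
proof (rule injI)
  fix a b :: "'a list" assume ab: "lp_mon \<delta> a = lp_mon \<delta> b"
  show "a = b"
  proof (rule nth_equalityI)
    show len: "length a = length b" using arg_cong[OF ab, of mdeg] by simp
    fix k assume "k < length a"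
    then have "Poly_Mapping.lookup (lp_mon \<delta> b) (a!k, \<delta>+k) \<noteq> 0"
      by (simp only: ab[symmetric] lookup_lp_mon_nonzero) simp
    then show "a!k = b!k" by (simp only: lookup_lp_mon_nonzero) simp
  qed
qed

lemma lp_mon_eq_lp_monD:
  assumes eq: "lp_mon \<delta> w = lp_mon \<delta>' w'" and "w \<noteq> []"
  shows "\<delta> = \<delta>' \<and> w = w'"
proof -
  have "w' \<noteq> []" using arg_cong[OF eq, of mdeg] \<open>w \<noteq> []\<close> by auto
  have "Poly_Mapping.lookup (lp_mon \<delta>' w') (w!0, \<delta>) \<noteq> 0"
    using \<open>w \<noteq> []\<close> by (simp only: eq[symmetric] lookup_lp_mon_nonzero) simp
  moreover have "Poly_Mapping.lookup (lp_mon \<delta> w) (w'!0, \<delta>') \<noteq> 0"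
    using \<open>w' \<noteq> []\<close> by (simp only: eq lookup_lp_mon_nonzero) simp
  ultimately have "\<delta> = \<delta>'" by (simp only: lookup_lp_mon_nonzero) simp
  with eq show ?thesis using inj_lp_mon by (metis injD)
qed

lemma lp_mon_split:
  assumes eq: "u + lp_mon k w = lp_mon \<delta> v" and "w \<noteq> []"
  shows "\<exists>A B. \<delta> + length A = k \<and> u = lp_mon \<delta> A + lp_mon (k + length w) B"
proof -
  have pos: "\<delta> \<le> k + t \<and> k + t < \<delta> + length v \<and> v!(k + t - \<delta>) = w!t" if "t < length w" for t
  proof -
    have "Poly_Mapping.lookup (lp_mon k w) (w!t, k+t) \<noteq> 0"
      using that by (simp only: lookup_lp_mon_nonzero) simp
    then have "Poly_Mapping.lookup (lp_mon \<delta> v) (w!t, k+t) \<noteq> 0"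
      by (simp add: eq[symmetric] lookup_add)
    then show ?thesis by (simp only: lookup_lp_mon_nonzero)
  qed
  from pos[of 0] pos[of "length w - 1"] \<open>w \<noteq> []\<close>
  have bounds: "\<delta> \<le> k" "k + length w \<le> \<delta> + length v" by auto
  define A where "A = take (k - \<delta>) v"
  define B where "B = drop (k - \<delta> + length w) v"
  have "take (length w) (drop (k - \<delta>) v) = w"
    by (rule nth_equalityI) (use bounds pos in \<open>auto simp: add.commute\<close>)
  then have "v = A @ w @ B"
    unfolding A_def B_def by (metis append_take_drop_id drop_drop add.commute)
  have lenA: "\<delta> + length A = k" using bounds by (simp add: A_def)
  have "lp_mon \<delta> v = lp_mon \<delta> A + lp_mon (k + length w) B + lp_mon k w"
    using \<open>v = A @ w @ B\<close> lenA by (simp add: lp_mon_append ac_simps)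
  then have "u = lp_mon \<delta> A + lp_mon (k + length w) B"
    using eq by (metis add_right_cancel)
  with lenA show ?thesis by blast
qed

section \<open>The letterplace embedding and its left inverse\<close>

definition lp_embed :: "nat \<Rightarrow> ('a,'k::comm_monoid_add) ncpoly \<Rightarrow> ('a,'k) lppoly" where
  "lp_embed \<delta> f = lin_ext (\<lambda>w c. Poly_Mapping.single (lp_mon \<delta> w) c) f"

lemma lp_embed_zero [simp]: "lp_embed \<delta> 0 = 0"
  by (simp add: lp_embed_def)

lemma lp_embed_single [simp]: "lp_embed \<delta> (Poly_Mapping.single w c) = Poly_Mapping.single (lp_mon \<delta> w) c"
  unfolding lp_embed_def by (rule lin_ext_single) simp

lemma lp_embed_add: "lp_embed \<delta> (f + g) = lp_embed \<delta> f + lp_embed \<delta> g"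
  unfolding lp_embed_def by (rule lin_ext_add) (simp_all add: single_add)

lemma lp_embed_sum: "lp_embed \<delta> (\<Sum>x\<in>A. f x) = (\<Sum>x\<in>A. lp_embed \<delta> (f x))"
  unfolding lp_embed_def by (rule lin_ext_sum) (simp_all add: single_add)

lemma lp_embed_scale:
  fixes f :: "('a,'k::semiring_0) ncpoly"
  shows "lp_embed \<delta> (Poly_Mapping.map ((*) a) f) = Poly_Mapping.map ((*) a) (lp_embed \<delta> f)"
proof -
  have map_add: "Poly_Mapping.map ((*) a) (p + q) = Poly_Mapping.map ((*) a) p + Poly_Mapping.map ((*) a) q"
    for p q :: "('a,'k) lppoly"
    by (rule poly_mapping_eqI) (simp add: lookup_map_mult lookup_add distrib_left)
  have "lp_embed \<delta> (Poly_Mapping.map ((*) a) f) = lin_ext (\<lambda>w x. Poly_Mapping.single (lp_mon \<delta> w) (a * x)) f"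
    unfolding lp_embed_def by (rule lin_ext_scale) simp
  also have "\<dots> = Poly_Mapping.map ((*) a) (lp_embed \<delta> f)"
    unfolding lp_embed_def
    by (subst lin_ext_hom[where H = "Poly_Mapping.map ((*) a)", OF _ map_add]) (simp_all add: map_eq_zero_iff)
  finally show ?thesis .
qed

lemma keys_lp_embed: "Poly_Mapping.keys (lp_embed \<delta> f) \<subseteq> lp_mon \<delta> ` Poly_Mapping.keys f"
proof -
  have "Poly_Mapping.keys (lp_embed \<delta> f) \<subseteq> (\<Union>w\<in>Poly_Mapping.keys f. {lp_mon \<delta> w})"
    unfolding lp_embed_def by (rule keys_lin_ext) simp
  then show ?thesis by blast
qed

lemma lp_sigma_power_lp_iota:
  fixes f :: "('a,'k::field) ncpoly"
  shows "(lp_sigma ^^ k) (lp_iota f) = lp_embed k f"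
proof (induction k)
  case 0
  show ?case by (simp add: lp_iota_def lp_embed_def lin_ext_def lp_mon_def)
next
  case (Suc k)
  have sigma: "lp_sigma p = lin_ext (\<lambda>m c. Poly_Mapping.single (lp_shift_mon m) c) p" for p :: "('a,'k) lppoly"
    by (simp add: lp_sigma_def lin_ext_def)
  have sigma_add: "lp_sigma (p + q) = lp_sigma p + lp_sigma q" for p q :: "('a,'k) lppoly"
    unfolding sigma by (rule lin_ext_add) (simp_all add: single_add)
  have "lp_sigma (lp_embed k f) = lin_ext (\<lambda>w c. lp_sigma (Poly_Mapping.single (lp_mon k w) c)) f"
    unfolding lp_embed_def by (rule lin_ext_hom[OF _ sigma_add]) (simp add: lp_sigma_def)
  also have "\<dots> = lp_embed (Suc k) f"
    unfolding lp_embed_def sigma by (simp add: lin_ext_single)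
  finally show ?case using Suc by simp
qed

definition lp_read :: "nat \<Rightarrow> ('a,'k::comm_monoid_add) lppoly \<Rightarrow> ('a,'k) ncpoly" where
  "lp_read \<delta> p =
     lin_ext (\<lambda>m c. if m \<in> range (lp_mon \<delta>) then Poly_Mapping.single (inv (lp_mon \<delta>) m) c else 0) p"

lemma lp_read_zero [simp]: "lp_read \<delta> 0 = 0"
  by (simp add: lp_read_def)

lemma lp_read_single:
  "lp_read \<delta> (Poly_Mapping.single m c) =
     (if m \<in> range (lp_mon \<delta>) then Poly_Mapping.single (inv (lp_mon \<delta>) m) c else 0)"
  unfolding lp_read_def by (rule lin_ext_single) simp

lemma lp_read_single_lp_mon [simp]:
  "lp_read \<delta> (Poly_Mapping.single (lp_mon \<delta> w) c) = Poly_Mapping.single w c"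
  by (simp add: lp_read_single inv_f_f[OF inj_lp_mon])

lemma lp_read_single_not_lp_mon:
  "m \<notin> range (lp_mon \<delta>) \<Longrightarrow> lp_read \<delta> (Poly_Mapping.single m c) = 0"
  by (simp add: lp_read_single)

lemma lp_read_add: "lp_read \<delta> (p + q) = lp_read \<delta> p + lp_read \<delta> q"
  unfolding lp_read_def by (rule lin_ext_add) (simp_all add: single_add)

lemma lp_read_diff:
  fixes p q :: "('a,'k::ab_group_add) lppoly"
  shows "lp_read \<delta> (p - q) = lp_read \<delta> p - lp_read \<delta> q"
  unfolding lp_read_def by (rule lin_ext_diff) (simp_all add: single_add)

lemma lp_read_sum: "lp_read \<delta> (\<Sum>x\<in>A. f x) = (\<Sum>x\<in>A. lp_read \<delta> (f x))"
  unfolding lp_read_def by (rule lin_ext_sum) (simp_all add: single_add)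

lemma lp_read_lp_embed [simp]: "lp_read \<delta> (lp_embed \<delta> f) = f"
  unfolding lp_embed_def
  by (subst lin_ext_hom[OF lp_read_zero lp_read_add]) (simp add: lin_ext_single_id)

lemma keys_lp_read: "Poly_Mapping.keys (lp_read \<delta> p) \<subseteq> {w. lp_mon \<delta> w \<in> Poly_Mapping.keys p}"
proof -
  have "Poly_Mapping.keys (lp_read \<delta> p) \<subseteq> (\<Union>m\<in>Poly_Mapping.keys p. {w. lp_mon \<delta> w = m})"
    unfolding lp_read_def by (rule keys_lin_ext) (auto simp: inv_f_f[OF inj_lp_mon])
  then show ?thesis by blast
qed

section \<open>The kernel ideal\<close>

interpretation ring_module: module "(*) :: 'r::comm_ring_1 \<Rightarrow> 'r \<Rightarrow> 'r"
  by standard (simp_all add: algebra_simps)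

definition column_pair :: "'a \<Rightarrow> 'a \<Rightarrow> nat \<Rightarrow> ('a \<times> nat) \<Rightarrow>\<^sub>0 nat" where
  "column_pair a b j = Poly_Mapping.single (a, j) 1 + Poly_Mapping.single (b, j) 1"

lemma lp_Kideal_eq_span:
  fixes I :: "('a,'k::field) ncpoly set"
  shows "lp_Kideal I = ring_module.span
     ({Poly_Mapping.single (column_pair a b j) 1 | a b j. True} \<union> (\<Union>k. lp_embed k ` I))"
proof -
  have pair: "lp_var a j * lp_var b j = Poly_Mapping.single (column_pair a b j) (1::'k)" for a b j
    by (simp add: lp_var_def column_pair_def mult_single)
  have embed: "(lp_sigma ^^ k) ` lp_iota ` I = lp_embed k ` I" for k
    by (auto simp: lp_sigma_power_lp_iota image_image)
  show ?thesis
    unfolding lp_Kideal_def ideal_gen_def pair embed by blast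
qed

lemma lp_Kideal_zero [simp]: "0 \<in> lp_Kideal I"
  unfolding lp_Kideal_def ideal_gen_def by (rule ring_module.span_zero)

lemma lp_Kideal_add: "p \<in> lp_Kideal I \<Longrightarrow> q \<in> lp_Kideal I \<Longrightarrow> p + q \<in> lp_Kideal I"
  unfolding lp_Kideal_def ideal_gen_def by (rule ring_module.span_add)

lemma lp_Kideal_diff: "p \<in> lp_Kideal I \<Longrightarrow> q \<in> lp_Kideal I \<Longrightarrow> p - q \<in> lp_Kideal I"
  unfolding lp_Kideal_def ideal_gen_def by (rule ring_module.span_diff)

lemma lp_Kideal_mult: "p \<in> lp_Kideal I \<Longrightarrow> r * p \<in> lp_Kideal I"
  unfolding lp_Kideal_def ideal_gen_def by (rule ring_module.span_scale)

lemma lp_Kideal_sum: "(\<And>x. x \<in> A \<Longrightarrow> f x \<in> lp_Kideal I) \<Longrightarrow> (\<Sum>x\<in>A. f x) \<in> lp_Kideal I"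
  unfolding lp_Kideal_def ideal_gen_def by (rule ring_module.span_sum)

lemma lp_embed_mem_lp_Kideal: "f \<in> I \<Longrightarrow> lp_embed k f \<in> lp_Kideal I"
  unfolding lp_Kideal_eq_span by (rule ring_module.span_base) blast

lemma column_pair_mem_lp_Kideal:
  "Poly_Mapping.single (u + column_pair a b j) c \<in> lp_Kideal I"
proof -
  have "Poly_Mapping.single (column_pair a b j) 1 \<in> lp_Kideal I"
    unfolding lp_Kideal_eq_span by (rule ring_module.span_base) blast
  then have "Poly_Mapping.single u c * Poly_Mapping.single (column_pair a b j) 1 \<in> lp_Kideal I"
    by (rule lp_Kideal_mult)
  then show ?thesis by (simp add: mult_single)
qed

lemma span_additive_image:
  fixes T :: "('m::comm_monoid_add \<Rightarrow>\<^sub>0 'k::comm_ring_1) \<Rightarrow> 'v::comm_monoid_add"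
  assumes "x \<in> ring_module.span G"
    and T_zero: "T 0 = 0" and T_add: "\<And>a b. T (a + b) = T a + T b"
    and S_zero: "0 \<in> S" and S_add: "\<And>a b. a \<in> S \<Longrightarrow> b \<in> S \<Longrightarrow> a + b \<in> S"
    and T_gen: "\<And>u c g. g \<in> G \<Longrightarrow> T (Poly_Mapping.single u c * g) \<in> S"
  shows "T x \<in> S"
  using assms(1)
proof (induction rule: ring_module.span_induct_alt)
  case base
  then show ?case by (simp add: T_zero S_zero)
next
  case (step r g y)
  have T_sum: "T (\<Sum>a\<in>A. f a) = (\<Sum>a\<in>A. T (f a))" for A and f :: "_ \<Rightarrow> 'm \<Rightarrow>\<^sub>0 'k"
    using sum_comp_morphism[of T f A, OF T_zero T_add] by (simp add: o_def)
  have "r * g = (\<Sum>u\<in>Poly_Mapping.keys r. Poly_Mapping.single u (Poly_Mapping.lookup r u) * g)"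
    by (subst poly_mapping_sum_single[of r]) (simp add: sum_distrib_right)
  then have "T (r * g) \<in> S"
    using T_gen[OF step(1)] by (simp add: T_sum sum_mem_add_closed[OF S_zero S_add])
  with step show ?case by (simp add: T_add S_add)
qed

lemma add_column_pair_notin_range_lp_mon: "u + column_pair a b j \<notin> range (lp_mon \<delta>)"
proof
  assume "u + column_pair a b j \<in> range (lp_mon \<delta>)"
  then obtain w where eq: "lp_mon \<delta> w = u + column_pair a b j" by auto
  have a: "Poly_Mapping.lookup (lp_mon \<delta> w) (a, j) \<ge> 1 + (if a = b then 1 else 0)"
    and b: "Poly_Mapping.lookup (lp_mon \<delta> w) (b, j) \<noteq> 0"
    unfolding eq column_pair_def by (simp_all add: lookup_add lookup_single when_def)
  have "a = b"
  proof (rule ccontr)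
    assume "a \<noteq> b"
    with a have "Poly_Mapping.lookup (lp_mon \<delta> w) (a, j) \<noteq> 0" by simp
    with b show False
      using \<open>a \<noteq> b\<close> by (simp only: lookup_lp_mon_nonzero) simp
  qed
  with a show False using lookup_lp_mon_le_1[of \<delta> w "(a, j)"] by simp
qed

lemma single_mult_lp_embed:
  "Poly_Mapping.single u c * lp_embed k f = lin_ext (\<lambda>w x. Poly_Mapping.single (u + lp_mon k w) (c * x)) f"
  unfolding lp_embed_def
  by (subst lin_ext_hom[where H = "\<lambda>p. Poly_Mapping.single u c * p"]) (simp_all add: distrib_left mult_single)

lemma lp_read_mult_lp_embed_eq:
  "lp_read \<delta> (Poly_Mapping.single u c * lp_embed k f) =
     lin_ext (\<lambda>w x. lp_read \<delta> (Poly_Mapping.single (u + lp_mon k w) (c * x))) f"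
  unfolding single_mult_lp_embed by (rule lin_ext_hom) (simp_all add: lp_read_add)

lemma lp_read_mult_lp_embed_nonconst:
  assumes hom: "\<And>w. w \<in> Poly_Mapping.keys f \<Longrightarrow> length w = e" and "e \<noteq> 0"
  shows "\<exists>A B. lp_read \<delta> (Poly_Mapping.single u c * lp_embed k f)
           \<in> {0, ncmul (ncmul (Poly_Mapping.single A c) f) (Poly_Mapping.single B 1)}"
proof (cases "\<exists>A B. \<delta> + length A = k \<and> u = lp_mon \<delta> A + lp_mon (k + e) B")
  case True
  then obtain A B where split: "\<delta> + length A = k" "u = lp_mon \<delta> A + lp_mon (k + e) B" by blast
  have "lp_read \<delta> (Poly_Mapping.single u c * lp_embed k f) =
      lin_ext (\<lambda>w x. Poly_Mapping.single (A @ w @ B) (c * x)) f"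
    unfolding lp_read_mult_lp_embed_eq
  proof (rule lin_ext_cong)
    fix w assume "w \<in> Poly_Mapping.keys f"
    then have "u + lp_mon k w = lp_mon \<delta> (A @ w @ B)"
      using split hom by (simp add: lp_mon_append ac_simps)
    then show "lp_read \<delta> (Poly_Mapping.single (u + lp_mon k w) (c * Poly_Mapping.lookup f w)) =
        Poly_Mapping.single (A @ w @ B) (c * Poly_Mapping.lookup f w)" by simp
  qed
  also have "\<dots> = ncmul (ncmul (Poly_Mapping.single A c) f) (Poly_Mapping.single B 1)"
    unfolding ncmul_single_left ncmul_single_right
    by (subst lin_ext_hom[where H = "lin_ext (\<lambda>w a. Poly_Mapping.single (w @ B) (a * 1))"])
       (simp_all add: lin_ext_add lin_ext_single single_add)
  finally show ?thesis by blast
next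
  case False
  have "lp_read \<delta> (Poly_Mapping.single (u + lp_mon k w) x) = 0" if "w \<in> Poly_Mapping.keys f" for w x
  proof (rule lp_read_single_not_lp_mon, rule notI)
    assume "u + lp_mon k w \<in> range (lp_mon \<delta>)"
    moreover have "w \<noteq> []" using hom[OF that] \<open>e \<noteq> 0\<close> by auto
    ultimately show False
      using lp_mon_split[of u k w \<delta>] False hom[OF that] by auto
  qed
  then have "lp_read \<delta> (Poly_Mapping.single u c * lp_embed k f) = lin_ext (\<lambda>w x. 0) f"
    unfolding lp_read_mult_lp_embed_eq by (intro lin_ext_cong)
  then show ?thesis by (simp add: lin_ext_def)
qed

lemma lp_read_mult_lp_embed_homog:
  assumes hom: "\<And>w. w \<in> Poly_Mapping.keys f \<Longrightarrow> length w = e"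
  shows "\<exists>A B. lp_read \<delta> (Poly_Mapping.single u c * lp_embed k f)
           \<in> {0, ncmul (ncmul (Poly_Mapping.single A c) f) (Poly_Mapping.single B 1)}"
proof (cases "e = 0")
  case True
  define a where "a = Poly_Mapping.lookup f []"
  have f_eq: "f = Poly_Mapping.single [] a"
    by (rule poly_mapping_eqI) (use hom True in \<open>auto simp: a_def lookup_single when_def in_keys_iff\<close>)
  have read: "lp_read \<delta> (Poly_Mapping.single u c * lp_embed k f) = lp_read \<delta> (Poly_Mapping.single u (c * a))"
    unfolding lp_read_mult_lp_embed_eq by (simp add: f_eq lin_ext_single)
  show ?thesis
  proof (cases "u \<in> range (lp_mon \<delta>)")
    case True
    then obtain v where v: "u = lp_mon \<delta> v" by blast
    have "ncmul (ncmul (Poly_Mapping.single [] c) f) (Poly_Mapping.single v 1) = Poly_Mapping.single v (c * a)"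
      by (simp add: ncmul_single_left ncmul_single_right f_eq lin_ext_single)
    then show ?thesis
      unfolding read unfolding v lp_read_single_lp_mon by (intro exI[of _ "[]"] exI[of _ v]) simp
  qed (simp add: read lp_read_single_not_lp_mon)
qed (rule lp_read_mult_lp_embed_nonconst[OF hom])

locale graded_ideal =
  fixes I :: "('a, 'k::field) ncpoly set"
  assumes graded_two_sided_ideal: "graded_two_sided_ideal I"
begin

lemma ideal_zero: "0 \<in> I"
  using graded_two_sided_ideal by (simp add: graded_two_sided_ideal_def)

lemma ideal_add: "f \<in> I \<Longrightarrow> g \<in> I \<Longrightarrow> f + g \<in> I"
  using graded_two_sided_ideal by (simp add: graded_two_sided_ideal_def)

lemma ideal_mult_left: "f \<in> I \<Longrightarrow> ncmul g f \<in> I"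
  using graded_two_sided_ideal by (simp add: graded_two_sided_ideal_def)

lemma ideal_mult_right: "f \<in> I \<Longrightarrow> ncmul f g \<in> I"
  using graded_two_sided_ideal by (simp add: graded_two_sided_ideal_def)

lemma ideal_nc_part: "f \<in> I \<Longrightarrow> nc_part d f \<in> I"
  using graded_two_sided_ideal by (simp add: graded_two_sided_ideal_def)

lemma ideal_sum: "(\<And>x. x \<in> A \<Longrightarrow> f x \<in> I) \<Longrightarrow> (\<Sum>x\<in>A. f x) \<in> I"
  by (rule sum_mem_add_closed[OF ideal_zero ideal_add])

lemma lp_read_lp_Kideal:
  assumes "p \<in> lp_Kideal I"
  shows "lp_read \<delta> p \<in> I"
  using assms unfolding lp_Kideal_eq_span
proof (rule span_additive_image)
  fix u c g
  assume "g \<in> {Poly_Mapping.single (column_pair a b j) 1 | a b j. True} \<union> (\<Union>k. lp_embed k ` I)"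
  then consider a b j where "g = Poly_Mapping.single (column_pair a b j) 1"
    | k f where "f \<in> I" "g = lp_embed k f"
    by blast
  then show "lp_read \<delta> (Poly_Mapping.single u c * g) \<in> I"
  proof cases
    case 1
    then show ?thesis
      by (simp add: mult_single lp_read_single_not_lp_mon[OF add_column_pair_notin_range_lp_mon] ideal_zero)
  next
    case (2 k f)
    have "lp_read \<delta> (Poly_Mapping.single u c * lp_embed k f) =
        (\<Sum>e\<in>length ` Poly_Mapping.keys f. lp_read \<delta> (Poly_Mapping.single u c * lp_embed k (nc_part e f)))"
      by (subst (1) sum_nc_part[symmetric]) (simp add: lp_embed_sum sum_distrib_left lp_read_sum)
    also have "\<dots> \<in> I"
    proof (rule ideal_sum)
      fix e
      have "nc_part e f \<in> I" using 2(1) by (rule ideal_nc_part)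
      moreover obtain A B where "lp_read \<delta> (Poly_Mapping.single u c * lp_embed k (nc_part e f))
          \<in> {0, ncmul (ncmul (Poly_Mapping.single A c) (nc_part e f)) (Poly_Mapping.single B 1)}"
        using lp_read_mult_lp_embed_homog keys_nc_part by blast
      ultimately show "lp_read \<delta> (Poly_Mapping.single u c * lp_embed k (nc_part e f)) \<in> I"
        using ideal_zero ideal_mult_right[OF ideal_mult_left] by auto
    qed
    finally show ?thesis using 2 by simp
  qed
qed (simp_all add: lp_read_add ideal_zero ideal_add)

end

section \<open>Reduction of homogeneous polynomials to words\<close>

lemma column_sum_le_one:
  fixes u :: "('a::finite \<times> nat) \<Rightarrow>\<^sub>0 nat"
  assumes no_pair: "\<And>u' a b. u \<noteq> u' + column_pair a b j"
  shows "(\<Sum>x\<in>UNIV. Poly_Mapping.lookup u (x, j)) \<le> 1"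
proof (rule ccontr)
  let ?n = "\<lambda>x. Poly_Mapping.lookup u (x, j)"
  assume "\<not> ?thesis"
  then have sum2: "sum ?n UNIV \<ge> 2" by simp
  obtain a where a: "?n a \<noteq> 0"
  proof (rule ccontr)
    assume "\<not> thesis"
    with that have "?n x = 0" for x by blast
    with sum2 show False by simp
  qed
  obtain b where b: "?n b \<ge> (if a = b then 2 else 1)"
  proof (cases "?n a \<ge> 2")
    case True
    then show ?thesis using that[of a] by simp
  next
    case False
    have "sum ?n UNIV = ?n a + sum ?n (UNIV - {a})"
      by (simp add: sum.remove)
    with sum2 False have "sum ?n (UNIV - {a}) \<noteq> 0" by linarith
    then obtain b where "b \<in> UNIV - {a}" "?n b \<noteq> 0"
      by (meson sum.neutral)
    then show ?thesis using that[of b] by simp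
  qed
  have "Poly_Mapping.lookup (column_pair a b j) p \<le> Poly_Mapping.lookup u p" for p
    using a b by (cases "a = b") (auto simp: column_pair_def lookup_add lookup_single when_def)
  then have "u = (u - column_pair a b j) + column_pair a b j"
    by (intro poly_mapping_eqI) (simp add: lookup_add lookup_minus)
  with no_pair show False by blast
qed

lemma nat_sum_le_one_eq_card:
  fixes f :: "'a \<Rightarrow> nat"
  assumes "finite A" "\<And>x. x \<in> A \<Longrightarrow> f x \<le> 1" "sum f A = card A" "x \<in> A"
  shows "f x = 1"
proof (rule ccontr)
  assume "f x \<noteq> 1"
  with assms(2,4) have "f x = 0" by fastforce
  have "sum f A = f x + sum f (A - {x})"
    using assms(1,4) by (rule sum.remove)
  also have "\<dots> \<le> card (A - {x})"
    using \<open>f x = 0\<close> sum_mono[of "A - {x}" f "\<lambda>_. 1"] assms(2) by simp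
  also have "\<dots> < card A"
    using assms(1,4) by (rule card_Diff1_less)
  finally show False using assms(3) by simp
qed

lemma mdeg_eq_sum_columns:
  fixes u :: "('a::finite \<times> nat) \<Rightarrow>\<^sub>0 nat"
  assumes "finite J" "\<And>p. p \<in> Poly_Mapping.keys u \<Longrightarrow> snd p \<in> J"
  shows "mdeg u = (\<Sum>j\<in>J. \<Sum>x\<in>UNIV. Poly_Mapping.lookup u (x, j))"
proof -
  have "mdeg u = (\<Sum>p\<in>UNIV \<times> J. Poly_Mapping.lookup u p)"
    unfolding mdeg_def by (rule sum.mono_neutral_left) (use assms in \<open>auto simp: in_keys_iff\<close>)
  also have "\<dots> = (\<Sum>x\<in>UNIV. \<Sum>j\<in>J. Poly_Mapping.lookup u (x, j))"
    by (simp add: sum.cartesian_product)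
  finally show ?thesis by (simp add: sum.swap[of _ J])
qed

lemma mem_range_lp_mon_if_no_column_pair:
  fixes u :: "('a::finite \<times> nat) \<Rightarrow>\<^sub>0 nat"
  assumes cols: "\<And>p. p \<in> Poly_Mapping.keys u \<Longrightarrow> \<delta> \<le> snd p \<and> snd p < d"
    and deg: "mdeg u = d - \<delta>"
    and no_pair: "\<And>u' a b j. u \<noteq> u' + column_pair a b j"
  shows "u \<in> range (lp_mon \<delta>)"
proof -
  define c where "c j = (\<Sum>x\<in>UNIV. Poly_Mapping.lookup u (x, j))" for j
  have c_le: "c j \<le> 1" for j
    unfolding c_def by (rule column_sum_le_one) (rule no_pair)
  have "(\<Sum>j\<in>{\<delta>..<d}. c j) = card {\<delta>..<d}"
    using mdeg_eq_sum_columns[of "{\<delta>..<d}" u] cols deg by (simp add: c_def)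
  then have c_one: "c j = 1" if "j \<in> {\<delta>..<d}" for j
    using nat_sum_le_one_eq_card[of "{\<delta>..<d}" c j] that c_le by simp
  define w where "w = map (\<lambda>j. SOME x. Poly_Mapping.lookup u (x, j) = 1) [\<delta>..<d]"
  have "u = lp_mon \<delta> w"
  proof (rule poly_mapping_eqI)
    fix p :: "'a \<times> nat"
    obtain x j where p: "p = (x, j)" by fastforce
    show "Poly_Mapping.lookup u p = Poly_Mapping.lookup (lp_mon \<delta> w) p"
    proof (cases "j \<in> {\<delta>..<d}")
      case False
      then have "(x, j) \<notin> Poly_Mapping.keys u" using cols by fastforce
      then have "Poly_Mapping.lookup u (x, j) = 0" by (simp add: in_keys_iff)
      moreover have "length w = d - \<delta>" by (simp add: w_def)
      ultimately show ?thesis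
        using False unfolding p lookup_lp_mon by auto
    next
      case True
      then obtain y where y: "Poly_Mapping.lookup u (y, j) = 1"
        and others: "\<And>z. z \<noteq> y \<Longrightarrow> Poly_Mapping.lookup u (z, j) = 0"
        using c_one[OF True] unfolding c_def by (auto simp: sum_eq_Suc0_iff)
      then have "(SOME x. Poly_Mapping.lookup u (x, j) = 1) = y"
        by (intro some_equality) (use others in fastforce)+
      moreover have "j - \<delta> < d - \<delta>" using True by auto
      ultimately have "w!(j - \<delta>) = y" "\<delta> \<le> j \<and> j < \<delta> + length w"
        using True by (simp_all add: w_def)
      then show ?thesis
        unfolding p lookup_lp_mon by (cases "x = y") (simp_all add: y others)
    qed
  qed
  then show ?thesis by blast
qed

lemma diff_lp_embed_lp_read_in_lp_Kideal:
  fixes p :: "('a::finite,'k::field) lppoly"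
  assumes hom: "lp_homog (int d - int \<delta>) p" and vars: "lp_in_vars \<delta> d p"
  shows "p - lp_embed \<delta> (lp_read \<delta> p) \<in> lp_Kideal I"
proof -
  have "Poly_Mapping.single u c - lp_embed \<delta> (lp_read \<delta> (Poly_Mapping.single u c)) \<in> lp_Kideal I"
    if u: "u \<in> Poly_Mapping.keys p" for u c
  proof (cases "u \<in> range (lp_mon \<delta>)")
    case True
    then show ?thesis by auto
  next
    case False
    have "int (mdeg u) = int d - int \<delta>" using hom u unfolding lp_homog_def by blast
    then have "mdeg u = d - \<delta>" by linarith
    moreover have "\<delta> \<le> snd q \<and> snd q < d" if "q \<in> Poly_Mapping.keys u" for q
      using vars u that unfolding lp_in_vars_def by blast
    ultimately obtain u' a b j where "u = u' + column_pair a b j"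
      using mem_range_lp_mon_if_no_column_pair[of u \<delta> d] False by blast
    then have "Poly_Mapping.single u c \<in> lp_Kideal I"
      using column_pair_mem_lp_Kideal by simp
    with False show ?thesis by (simp add: lp_read_single_not_lp_mon)
  qed
  then have "(\<Sum>u\<in>Poly_Mapping.keys p. Poly_Mapping.single u (Poly_Mapping.lookup p u)
      - lp_embed \<delta> (lp_read \<delta> (Poly_Mapping.single u (Poly_Mapping.lookup p u)))) \<in> lp_Kideal I"
    by (intro lp_Kideal_sum)
  then show ?thesis
    by (subst (1 2) poly_mapping_sum_single) (simp add: lp_read_sum lp_embed_sum sum_subtractf)
qed

definition lp_hpart :: "int \<Rightarrow> ('a,'k::comm_monoid_add) lppoly \<Rightarrow> ('a,'k) lppoly" where
  "lp_hpart e p = lin_ext (\<lambda>m c. if int (mdeg m) = e then Poly_Mapping.single m c else 0) p"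

lemma lp_hpart_zero [simp]: "lp_hpart e 0 = 0"
  by (simp add: lp_hpart_def)

lemma lp_hpart_single:
  "lp_hpart e (Poly_Mapping.single m c) = (if int (mdeg m) = e then Poly_Mapping.single m c else 0)"
  unfolding lp_hpart_def by (rule lin_ext_single) simp

lemma lp_hpart_add: "lp_hpart e (p + q) = lp_hpart e p + lp_hpart e q"
  unfolding lp_hpart_def by (rule lin_ext_add) (simp_all add: single_add)

lemma lp_hpart_diff:
  fixes p q :: "('a,'k::ab_group_add) lppoly"
  shows "lp_hpart e (p - q) = lp_hpart e p - lp_hpart e q"
  unfolding lp_hpart_def by (rule lin_ext_diff) (simp_all add: single_add)

lemma keys_lp_hpart: "Poly_Mapping.keys (lp_hpart e p) \<subseteq> {m \<in> Poly_Mapping.keys p. int (mdeg m) = e}"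
proof -
  have "Poly_Mapping.keys (lp_hpart e p) \<subseteq> (\<Union>m\<in>Poly_Mapping.keys p. {m' \<in> {m}. int (mdeg m') = e})"
    unfolding lp_hpart_def by (rule keys_lin_ext) auto
  then show ?thesis by auto
qed

lemma lp_homog_lp_hpart: "lp_homog e (lp_hpart e p)"
  using keys_lp_hpart unfolding lp_homog_def by blast

lemma lp_in_vars_lp_hpart: "lp_in_vars a b p \<Longrightarrow> lp_in_vars a b (lp_hpart e p)"
  using keys_lp_hpart unfolding lp_in_vars_def by blast

lemma lp_hpart_eq_self: "lp_homog e p \<Longrightarrow> lp_hpart e p = p"
  unfolding lp_hpart_def lp_homog_def
  by (subst (2) lin_ext_single_id[symmetric], rule lin_ext_cong) auto

lemma lp_hpart_mult_lp_embed:
  "lp_hpart e (Poly_Mapping.single u c * lp_embed k f) =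
     (if e < int (mdeg u) then 0 else Poly_Mapping.single u c * lp_embed k (nc_part (nat (e - int (mdeg u))) f))"
proof -
  have hpart: "lp_hpart e (Poly_Mapping.single u c * lp_embed k f) =
      lin_ext (\<lambda>w x. if int (mdeg u + length w) = e then Poly_Mapping.single (u + lp_mon k w) (c * x) else 0) f"
    unfolding single_mult_lp_embed
    by (subst lin_ext_hom[OF _ lp_hpart_add]) (simp_all add: lp_hpart_single mdeg_add)
  show ?thesis
  proof (cases "e < int (mdeg u)")
    case True
    then have "lp_hpart e (Poly_Mapping.single u c * lp_embed k f) = lin_ext (\<lambda>w x. 0) f"
      unfolding hpart by (intro lin_ext_cong) auto
    with True show ?thesis by (simp add: lin_ext_def)
  next
    case False
    have "Poly_Mapping.single u c * lp_embed k (nc_part (nat (e - int (mdeg u))) f) =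
        lin_ext (\<lambda>w x. lin_ext (\<lambda>w x. Poly_Mapping.single (u + lp_mon k w) (c * x))
          (if length w = nat (e - int (mdeg u)) then Poly_Mapping.single w x else 0)) f"
      unfolding single_mult_lp_embed nc_part_eq_lin_ext
      by (rule lin_ext_hom) (simp_all add: lin_ext_add single_add distrib_left)
    also have "\<dots> = lp_hpart e (Poly_Mapping.single u c * lp_embed k f)"
      unfolding hpart by (rule lin_ext_cong) (use False in \<open>auto simp: lin_ext_single\<close>)
    finally show ?thesis using False by simp
  qed
qed

context graded_ideal
begin

lemma lp_hpart_lp_Kideal:
  assumes "p \<in> lp_Kideal I"
  shows "lp_hpart e p \<in> lp_Kideal I"
  using assms unfolding lp_Kideal_eq_span
proof (rule span_additive_image)
  fix u c g
  assume "g \<in> {Poly_Mapping.single (column_pair a b j) 1 | a b j. True} \<union> (\<Union>k. lp_embed k ` I)"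
  then consider a b j where "g = Poly_Mapping.single (column_pair a b j) 1"
    | k f where "f \<in> I" "g = lp_embed k f"
    by blast
  then show "lp_hpart e (Poly_Mapping.single u c * g) \<in> ring_module.span
      ({Poly_Mapping.single (column_pair a b j) 1 | a b j. True} \<union> (\<Union>k. lp_embed k ` I))"
  proof cases
    case 1
    then show ?thesis
      using column_pair_mem_lp_Kideal[of u a b j c I]
      by (simp add: mult_single lp_hpart_single lp_Kideal_eq_span ring_module.span_zero)
  next
    case (2 k f)
    have "lp_hpart e (Poly_Mapping.single u c * lp_embed k f) \<in> lp_Kideal I"
      using 2 by (simp add: lp_hpart_mult_lp_embed lp_Kideal_mult lp_embed_mem_lp_Kideal ideal_nc_part)
    with 2 show ?thesis by (simp add: lp_Kideal_eq_span)
  qed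
qed (simp_all add: lp_hpart_add ring_module.span_zero ring_module.span_add)

end

section \<open>Reading back the letterplace module\<close>

lemma lp_read_single_lp_mon_add_lp_mon:
  assumes "B \<noteq> []"
  shows "lp_read \<delta> (Poly_Mapping.single (lp_mon D B + lp_mon \<delta> w) x) =
    (if \<delta> + length w = D then Poly_Mapping.single (w @ B) x else 0)"
proof (cases "\<delta> + length w = D")
  case True
  then have "lp_mon D B + lp_mon \<delta> w = lp_mon \<delta> (w @ B)"
    by (simp add: lp_mon_append add.commute)
  with True show ?thesis by simp
next
  case False
  have "lp_mon D B + lp_mon \<delta> w \<notin> range (lp_mon \<delta>)"
  proof
    assume "lp_mon D B + lp_mon \<delta> w \<in> range (lp_mon \<delta>)"
    then obtain v where v: "lp_mon D B + lp_mon \<delta> w = lp_mon \<delta> v" by auto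
    show False
    proof (cases "w = []")
      case True
      with v have "lp_mon D B = lp_mon \<delta> v" by simp
      with \<open>B \<noteq> []\<close> have "D = \<delta>" by (blast dest: lp_mon_eq_lp_monD)
      with True False show False by simp
    next
      case nonempty: False
      from lp_mon_split[OF v nonempty] obtain A B'
        where "\<delta> + length A = \<delta>" "lp_mon D B = lp_mon \<delta> A + lp_mon (\<delta> + length w) B'" by blast
      then have "lp_mon D B = lp_mon (\<delta> + length w) B'" by simp
      with \<open>B \<noteq> []\<close> have "D = \<delta> + length w" by (blast dest: lp_mon_eq_lp_monD)
      with False show False by simp
    qed
  qed
  with False show ?thesis by (simp add: lp_read_single_not_lp_mon)
qed

lemma lp_read_single_add_lp_mon:
  assumes "\<And>D B. u \<noteq> lp_mon D B"
  shows "lp_read \<delta> (Poly_Mapping.single (u + lp_mon \<delta> w) x) = 0"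
proof (rule lp_read_single_not_lp_mon, rule notI)
  assume "u + lp_mon \<delta> w \<in> range (lp_mon \<delta>)"
  then obtain v where v: "u + lp_mon \<delta> w = lp_mon \<delta> v" by auto
  show False
  proof (cases "w = []")
    case True
    with v have "u = lp_mon \<delta> v" by simp
    with assms show False by blast
  next
    case False
    from lp_mon_split[OF v False] obtain A B
      where "\<delta> + length A = \<delta>" "u = lp_mon \<delta> A + lp_mon (\<delta> + length w) B" by blast
    then have "u = lp_mon (\<delta> + length w) B" by simp
    with assms show False by blast
  qed
qed

lemma lp_read_mult_lp_embed_unit:
  "lp_read \<delta> (Poly_Mapping.single 0 c * lp_embed \<delta> f) = ncmul f (Poly_Mapping.single [] c)"
  unfolding lp_read_mult_lp_embed_eq ncmul_single_right by (auto intro!: lin_ext_cong simp: mult.commute)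

lemma lp_read_mult_lp_embed_lp_mon:
  assumes "B \<noteq> []"
  shows "lp_read \<delta> (Poly_Mapping.single (lp_mon D B) c * lp_embed \<delta> f) =
    ncmul (if \<delta> \<le> D then nc_part (D - \<delta>) f else 0) (Poly_Mapping.single B c)"
proof -
  have "lp_read \<delta> (Poly_Mapping.single (lp_mon D B) c * lp_embed \<delta> f) =
      lin_ext (\<lambda>w x. if \<delta> + length w = D then Poly_Mapping.single (w @ B) (c * x) else 0) f"
    unfolding lp_read_mult_lp_embed_eq
    by (rule lin_ext_cong) (rule lp_read_single_lp_mon_add_lp_mon[OF assms])
  also have "\<dots> = ncmul (if \<delta> \<le> D then nc_part (D - \<delta>) f else 0) (Poly_Mapping.single B c)"
  proof (cases "\<delta> \<le> D")
    case True
    then show ?thesis by (auto intro!: lin_ext_cong simp: ncmul_nc_part_single mult.commute)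
  qed (simp add: ncmul_def lin_ext_def)
  finally show ?thesis .
qed

lemma lp_read_mult_lp_embed_not_lp_mon:
  assumes "\<And>D B. u \<noteq> lp_mon D B"
  shows "lp_read \<delta> (Poly_Mapping.single u c * lp_embed \<delta> f) = 0"
proof -
  have "lp_read \<delta> (Poly_Mapping.single u c * lp_embed \<delta> f) = lin_ext (\<lambda>w x. 0) f"
    unfolding lp_read_mult_lp_embed_eq
    by (rule lin_ext_cong) (use assms in \<open>rule lp_read_single_add_lp_mon\<close>)
  then show ?thesis by (simp add: lin_ext_def)
qed

definition lp_read_mod :: "('b \<Rightarrow> nat) \<Rightarrow> ('b \<Rightarrow> ('a,'k::comm_monoid_add) lppoly) \<Rightarrow> ('b \<Rightarrow> ('a,'k) ncpoly)" where
  "lp_read_mod \<delta> h = (\<lambda>i. lp_read (\<delta> i) (h i))"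

lemma lp_iota_mod_eq: "lp_iota_mod \<delta> m = (\<lambda>i. lp_embed (\<delta> i) (m i))"
  by (simp add: lp_iota_mod_def lp_sigma_power_lp_iota)

(* The alphabet is finite for the pigeonhole step diff_lp_embed_lp_read_in_lp_Kideal. *)
locale graded_submodule = graded_ideal I for I :: "('a::finite, 'k::field) ncpoly set" +
  fixes \<delta> :: "'b \<Rightarrow> nat" and M :: "('b \<Rightarrow> ('a,'k) ncpoly) set"
  assumes graded_right_submodule_pre: "graded_right_submodule_pre I \<delta> M"
begin

lemma submodule_of_ideal: "(\<And>i. m i \<in> I) \<Longrightarrow> m \<in> M"
  using graded_right_submodule_pre by (simp add: graded_right_submodule_pre_def)

lemma submodule_add: "m \<in> M \<Longrightarrow> m' \<in> M \<Longrightarrow> m + m' \<in> M"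
  using graded_right_submodule_pre unfolding graded_right_submodule_pre_def plus_fun_def by blast

lemma submodule_mult_right: "m \<in> M \<Longrightarrow> (\<lambda>i. ncmul (m i) g) \<in> M"
  using graded_right_submodule_pre by (simp add: graded_right_submodule_pre_def)

lemma submodule_mod_part: "m \<in> M \<Longrightarrow> mod_part \<delta> d m \<in> M"
  using graded_right_submodule_pre by (simp add: graded_right_submodule_pre_def)

lemma submodule_zero: "0 \<in> M"
  by (rule submodule_of_ideal) (simp add: ideal_zero)

lemma submodule_sum: "(\<And>x. x \<in> A \<Longrightarrow> f x \<in> M) \<Longrightarrow> (\<Sum>x\<in>A. f x) \<in> M"
  by (rule sum_mem_add_closed[OF submodule_zero submodule_add])

lemma lp_read_mod_single_mult:
  assumes m: "m \<in> M"
  shows "lp_read_mod \<delta> (\<lambda>i. Poly_Mapping.single u c * lp_embed (\<delta> i) (m i)) \<in> M"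
proof -
  consider (unit) "u = 0" | (word) D B where "B \<noteq> []" "u = lp_mon D B" | (other) "\<And>D B. u \<noteq> lp_mon D B"
  proof (cases "\<exists>D B. u = lp_mon D B")
    case True
    then obtain D B where "u = lp_mon D B" by blast
    with that show thesis by (cases "B = []") auto
  qed blast
  then show ?thesis
  proof cases
    case unit
    then show ?thesis
      using submodule_mult_right[OF m] by (simp add: lp_read_mod_def lp_read_mult_lp_embed_unit)
  next
    case (word D B)
    then show ?thesis
      using submodule_mult_right[OF submodule_mod_part[OF m]]
      by (simp add: lp_read_mod_def lp_read_mult_lp_embed_lp_mon mod_part_def)
  next
    case other
    then show ?thesis
      using submodule_zero by (simp add: lp_read_mod_def lp_read_mult_lp_embed_not_lp_mon zero_fun_def)
  qed
qed

lemma lp_read_mod_mult: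
  assumes m: "m \<in> M"
  shows "lp_read_mod \<delta> (\<lambda>i. p * lp_embed (\<delta> i) (m i)) \<in> M"
proof -
  have "lp_read_mod \<delta> (\<lambda>i. p * lp_embed (\<delta> i) (m i)) =
      (\<Sum>u\<in>Poly_Mapping.keys p.
        lp_read_mod \<delta> (\<lambda>i. Poly_Mapping.single u (Poly_Mapping.lookup p u) * lp_embed (\<delta> i) (m i)))"
    unfolding lp_read_mod_def
    by (rule ext, subst poly_mapping_sum_single[of p]) (simp add: sum_fun_apply sum_distrib_right lp_read_sum)
  also have "\<dots> \<in> M"
    using m by (intro submodule_sum lp_read_mod_single_mult)
  finally show ?thesis .
qed

lemma lp_read_mod_L_pre:
  assumes "h \<in> L_pre I \<delta> M"
  shows "lp_read_mod \<delta> h \<in> M"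
proof -
  obtain g where g: "g \<in> module.span (\<lambda>p v i. p * v i) (lp_iota_mod \<delta> ` M)"
    and hg: "\<And>i. h i - g i \<in> lp_Kideal I"
    using assms unfolding L_pre_def by blast
  obtain t r where t: "t \<subseteq> lp_iota_mod \<delta> ` M" and g_eq: "g = (\<Sum>a\<in>t. (\<lambda>i. r a * a i))"
    using g unfolding module.span_explicit[OF module_pointwise_mult] by blast
  have "lp_read_mod \<delta> g = (\<Sum>a\<in>t. lp_read_mod \<delta> (\<lambda>i. r a * a i))"
    unfolding g_eq lp_read_mod_def by (rule ext) (simp add: sum_fun_apply lp_read_sum)
  also have "\<dots> \<in> M"
  proof (rule submodule_sum)
    fix a assume "a \<in> t"
    with t obtain m where "m \<in> M" "a = lp_iota_mod \<delta> m" by blast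
    then show "lp_read_mod \<delta> (\<lambda>i. r a * a i) \<in> M"
      by (simp add: lp_iota_mod_eq lp_read_mod_mult)
  qed
  finally have "lp_read_mod \<delta> g \<in> M" .
  moreover have "lp_read_mod \<delta> (h - g) \<in> M"
    using hg by (intro submodule_of_ideal) (simp add: lp_read_mod_def lp_read_lp_Kideal)
  ultimately have "lp_read_mod \<delta> g + lp_read_mod \<delta> (h - g) \<in> M"
    by (rule submodule_add)
  then show ?thesis
    by (simp add: lp_read_mod_def lp_read_diff fun_eq_iff plus_fun_def)
qed

lemma iota_Md_pre_subset_Lcut_pre: "iota_Md_pre I \<delta> M d \<subseteq> Lcut_pre I \<delta> M d"
proof
  fix h assume "h \<in> iota_Md_pre I \<delta> M d"
  then obtain m where m: "m \<in> M" "mod_homog \<delta> d m" and hm: "\<And>i. h i - lp_iota_mod \<delta> m i \<in> lp_Kideal I"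
    unfolding iota_Md_pre_def by blast
  have "h \<in> L_pre I \<delta> M"
    unfolding L_pre_def using m(1) hm module.span_base[OF module_pointwise_mult] by blast
  moreover have "lp_homog (int d - int (\<delta> i)) (lp_embed (\<delta> i) (m i))
      \<and> lp_in_vars (\<delta> i) d (lp_embed (\<delta> i) (m i))" for i
  proof -
    have len: "int (length w) = int d - int (\<delta> i)" if "w \<in> Poly_Mapping.keys (m i)" for w
      using m(2) that unfolding mod_homog_def nc_homog_def by blast
    show ?thesis
      unfolding lp_homog_def lp_in_vars_def
      using keys_lp_embed[of "\<delta> i" "m i"] len by (fastforce simp: keys_lp_mon)
  qed
  ultimately show "h \<in> Lcut_pre I \<delta> M d"
    unfolding Lcut_pre_def using hm by (auto simp: lp_iota_mod_eq)
qed

lemma Lcut_pre_homogeneous_representative: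
  assumes "h \<in> Lcut_pre I \<delta> M d"
  shows "\<exists>q. lp_homog (int d - int (\<delta> i)) q \<and> lp_in_vars (\<delta> i) d q \<and> h i - q \<in> lp_Kideal I"
proof -
  obtain p q where p: "lp_in_vars (\<delta> i) d p" "h i - p \<in> lp_Kideal I"
    and q: "lp_homog (int d - int (\<delta> i)) q" "h i - q \<in> lp_Kideal I"
    using assms unfolding Lcut_pre_def by blast
  define e where "e = int d - int (\<delta> i)"
  have "lp_hpart e (q - p) \<in> lp_Kideal I"
    using lp_Kideal_diff[OF p(2) q(2)] by (intro lp_hpart_lp_Kideal) simp
  moreover have "lp_hpart e (q - p) = q - lp_hpart e p"
    using q(1) by (simp add: lp_hpart_diff lp_hpart_eq_self e_def)
  ultimately have "h i - lp_hpart e p \<in> lp_Kideal I"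
    using lp_Kideal_add[OF q(2)] by fastforce
  moreover have "lp_homog e (lp_hpart e p)" by (rule lp_homog_lp_hpart)
  moreover have "lp_in_vars (\<delta> i) d (lp_hpart e p)" by (rule lp_in_vars_lp_hpart[OF p(1)])
  ultimately show ?thesis using e_def by blast
qed

lemma Lcut_pre_subset_iota_Md_pre: "Lcut_pre I \<delta> M d \<subseteq> iota_Md_pre I \<delta> M d"
proof
  fix h assume h: "h \<in> Lcut_pre I \<delta> M d"
  obtain P where P_homog: "\<And>i. lp_homog (int d - int (\<delta> i)) (P i)"
    and P_vars: "\<And>i. lp_in_vars (\<delta> i) d (P i)" and P_rep: "\<And>i. h i - P i \<in> lp_Kideal I"
    using Lcut_pre_homogeneous_representative[OF h] by metis
  define m where "m = lp_read_mod \<delta> P"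
  have "lp_read_mod \<delta> h \<in> M"
    using h unfolding Lcut_pre_def by (blast intro: lp_read_mod_L_pre)
  moreover have "lp_read_mod \<delta> (P - h) \<in> M"
    using lp_Kideal_diff[OF lp_Kideal_zero P_rep]
    by (intro submodule_of_ideal) (simp add: lp_read_mod_def lp_read_lp_Kideal)
  ultimately have "m \<in> M"
    using submodule_add by (fastforce simp: m_def lp_read_mod_def lp_read_diff plus_fun_def)
  moreover have "mod_homog \<delta> d m"
    unfolding mod_homog_def nc_homog_def
  proof (intro allI ballI)
    fix i w assume "w \<in> Poly_Mapping.keys (m i)"
    then have "lp_mon (\<delta> i) w \<in> Poly_Mapping.keys (P i)"
      using keys_lp_read unfolding m_def lp_read_mod_def by blast
    then show "int (length w) = int d - int (\<delta> i)"
      using P_homog unfolding lp_homog_def by fastforce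
  qed
  moreover have "h i - lp_iota_mod \<delta> m i \<in> lp_Kideal I" for i
  proof -
    have "h i - lp_iota_mod \<delta> m i = (h i - P i) + (P i - lp_embed (\<delta> i) (lp_read (\<delta> i) (P i)))"
      by (simp add: m_def lp_read_mod_def lp_iota_mod_eq)
    also have "\<dots> \<in> lp_Kideal I"
      using P_rep P_homog P_vars by (intro lp_Kideal_add diff_lp_embed_lp_read_in_lp_Kideal)
    finally show ?thesis .
  qed
  ultimately show "h \<in> iota_Md_pre I \<delta> M d"
    unfolding iota_Md_pre_def by blast
qed

end

section \<open>Dimensions\<close>

lemma (in module) sum_scale_two_point:
  assumes "finite B" "x \<in> B" "y \<in> B" "x \<noteq> y"
  shows "(\<Sum>b\<in>B. ((if b = x then 1 else 0) + (if b = y then -1 else 0)) *s f b) = f x - f y"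
proof -
  have point: "(\<Sum>b\<in>B. (if b = z then a else 0) *s f b) = a *s f z" if "z \<in> B" for z a
  proof -
    have "(\<Sum>b\<in>B. (if b = z then a else 0) *s f b) = (\<Sum>b\<in>B. if b = z then a *s f z else 0)"
      by (rule sum.cong) simp_all
    then show ?thesis using assms(1) that by simp
  qed
  show ?thesis
    using assms by (simp add: scale_left_distrib sum.distrib point)
qed

lemma card_indep_mod_transfer:
  fixes sc :: "'k::field \<Rightarrow> 'v::ab_group_add \<Rightarrow> 'v" and sc' :: "'k \<Rightarrow> 'w::ab_group_add \<Rightarrow> 'w"
  assumes "module sc" and "module sc'"
    and R_zero: "R 0 0"
    and R_lin: "\<And>a v v' u u'. R v v' \<Longrightarrow> R u u' \<Longrightarrow> R (sc a v + u) (sc' a v' + u')"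
    and R_total: "\<And>v. v \<in> V \<Longrightarrow> \<exists>v'\<in>V'. R v v'"
    and R_reflect: "\<And>v v'. R v v' \<Longrightarrow> v' \<in> W' \<Longrightarrow> v \<in> W"
    and "0 \<in> W'"
  shows "{card B | B. B \<subseteq> V \<and> indep_mod sc W B} \<subseteq> {card B | B. B \<subseteq> V' \<and> indep_mod sc' W' B}"
proof clarify
  fix B assume "B \<subseteq> V" and indep: "indep_mod sc W B"
  then have fin: "finite B" by (simp add: indep_mod_def)
  obtain g where g: "\<And>v. v \<in> B \<Longrightarrow> g v \<in> V' \<and> R v (g v)"
    using R_total \<open>B \<subseteq> V\<close> by (metis subsetD)
  have R_sum: "R (\<Sum>b\<in>B. sc (c b) b) (\<Sum>b\<in>B. sc' (c b) (g b))" for c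
  proof -
    have "R (\<Sum>b\<in>A. sc (c b) b) (\<Sum>b\<in>A. sc' (c b) (g b))" if "A \<subseteq> B" for A
      using finite_subset[OF that fin] that by (induction A rule: finite_induct) (simp_all add: R_zero R_lin g)
    then show ?thesis by blast
  qed
  have no_relation: "c b = 0" if "b \<in> B" "(\<Sum>b\<in>B. sc' (c b) (g b)) \<in> W'" for b c
    using indep R_reflect[OF R_sum that(2)] that(1) by (simp add: indep_mod_def)
  have inj: "inj_on g B"
  proof (rule inj_onI, rule ccontr)
    fix b1 b2 assume b: "b1 \<in> B" "b2 \<in> B" "g b1 = g b2" "b1 \<noteq> b2"
    define c where "c b = (if b = b1 then 1 else 0) + (if b = b2 then -1 else (0::'k))" for b
    have "(\<Sum>b\<in>B. sc' (c b) (g b)) = g b1 - g b2"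
      unfolding c_def using fin b(1,2,4) by (rule module.sum_scale_two_point[OF \<open>module sc'\<close>])
    then have "(\<Sum>b\<in>B. sc' (c b) (g b)) \<in> W'" using b(3) \<open>0 \<in> W'\<close> by simp
    from no_relation[OF b(1) this] b(4) show False by (simp add: c_def)
  qed
  have "indep_mod sc' W' (g ` B)"
    unfolding indep_mod_def
  proof (intro conjI allI impI ballI)
    show "finite (g ` B)" using fin by simp
    fix c b' assume "(\<Sum>b'\<in>g ` B. sc' (c b') b') \<in> W'" "b' \<in> g ` B"
    then show "c b' = 0"
      using no_relation[of _ "c \<circ> g"] by (auto simp: sum.reindex[OF inj])
  qed
  moreover have "g ` B \<subseteq> V'" using g by blast
  ultimately show "\<exists>B'. card B = card B' \<and> B' \<subseteq> V' \<and> indep_mod sc' W' B'"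
    using card_image[OF inj] by metis
qed

definition lp_represents ::
  "('a,'k::field) ncpoly set \<Rightarrow> ('b \<Rightarrow> nat) \<Rightarrow> ('b \<Rightarrow> ('a,'k) ncpoly) \<Rightarrow> ('b \<Rightarrow> ('a,'k) lppoly) \<Rightarrow> bool" where
  "lp_represents I \<delta> m h \<longleftrightarrow> (\<forall>i. h i - lp_iota_mod \<delta> m i \<in> lp_Kideal I)"

lemma lp_represents_zero: "lp_represents I \<delta> 0 0"
  by (simp add: lp_represents_def lp_iota_mod_eq)

lemma lp_represents_lin:
  assumes "lp_represents I \<delta> m h" "lp_represents I \<delta> m' h'"
  shows "lp_represents I \<delta> (nc_scale a m + m') (lp_scale a h + h')"
  unfolding lp_represents_def
proof
  fix i
  have "(lp_scale a h + h') i - lp_iota_mod \<delta> (nc_scale a m + m') i =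
      Poly_Mapping.single 0 a * (h i - lp_iota_mod \<delta> m i) + (h' i - lp_iota_mod \<delta> m' i)"
    by (simp add: lp_scale_def nc_scale_def lp_iota_mod_eq lp_embed_add lp_embed_scale
        mult_map_scale_conv_mult algebra_simps)
  also have "\<dots> \<in> lp_Kideal I"
    using assms unfolding lp_represents_def by (intro lp_Kideal_add lp_Kideal_mult) auto
  finally show "(lp_scale a h + h') i - lp_iota_mod \<delta> (nc_scale a m + m') i \<in> lp_Kideal I" .
qed

lemma lp_represents_lp_Kideal:
  "lp_represents I \<delta> m h \<Longrightarrow> (\<forall>i. m i \<in> I) \<Longrightarrow> (\<forall>i. h i \<in> lp_Kideal I)"
  unfolding lp_represents_def lp_iota_mod_eq
  by (metis diff_add_cancel lp_Kideal_add lp_embed_mem_lp_Kideal)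

lemma (in graded_ideal) lp_represents_ideal:
  assumes "lp_represents I \<delta> m h" "\<forall>i. h i \<in> lp_Kideal I"
  shows "\<forall>i. m i \<in> I"
proof
  fix i
  have "lp_embed (\<delta> i) (m i) = h i - (h i - lp_iota_mod \<delta> m i)"
    by (simp add: lp_iota_mod_eq)
  also have "\<dots> \<in> lp_Kideal I"
    using assms unfolding lp_represents_def by (blast intro: lp_Kideal_diff)
  finally have "lp_read (\<delta> i) (lp_embed (\<delta> i) (m i)) \<in> I"
    by (rule lp_read_lp_Kideal)
  then show "m i \<in> I" by simp
qed

context graded_submodule
begin

lemma iota_Md_pre_eq_Lcut_pre: "iota_Md_pre I \<delta> M d = Lcut_pre I \<delta> M d"
  using iota_Md_pre_subset_Lcut_pre Lcut_pre_subset_iota_Md_pre by blast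

lemma card_indep_mod_Md_eq_Lcut_pre:
  "{card B | B. B \<subseteq> {m \<in> M. mod_homog \<delta> d m} \<and> indep_mod nc_scale {m. \<forall>i. m i \<in> I} B} =
   {card B | B. B \<subseteq> Lcut_pre I \<delta> M d \<and> indep_mod lp_scale {h. \<forall>i. h i \<in> lp_Kideal I} B}"
  (is "?Md = ?Ld")
proof -
  have represented: "Lcut_pre I \<delta> M d = {h. \<exists>m \<in> {m \<in> M. mod_homog \<delta> d m}. lp_represents I \<delta> m h}"
    unfolding iota_Md_pre_eq_Lcut_pre[symmetric] by (auto simp: iota_Md_pre_def lp_represents_def)
  have modules: "module nc_scale" "module lp_scale"
    using module_pointwise_map_mult unfolding nc_scale_def lp_scale_def by auto
  show ?thesis
  proof
    show "?Md \<subseteq> ?Ld"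
    proof (rule card_indep_mod_transfer[where R = "lp_represents I \<delta>"])
      show "\<exists>h\<in>Lcut_pre I \<delta> M d. lp_represents I \<delta> m h" if "m \<in> {m \<in> M. mod_homog \<delta> d m}" for m
        using that unfolding represented
        by (intro bexI[of _ "lp_iota_mod \<delta> m"]) (auto simp: lp_represents_def)
    qed (use modules lp_represents_zero lp_represents_lin in \<open>auto dest: lp_represents_ideal\<close>)
    show "?Ld \<subseteq> ?Md"
    proof (rule card_indep_mod_transfer[where R = "\<lambda>h m. lp_represents I \<delta> m h"])
      show "\<exists>m\<in>{m \<in> M. mod_homog \<delta> d m}. lp_represents I \<delta> m h" if "h \<in> Lcut_pre I \<delta> M d" for h
        using that unfolding represented by blast
    qed (use modules lp_represents_zero lp_represents_lin ideal_zero in \<open>auto dest: lp_represents_lp_Kideal\<close>)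
  qed
qed

end

theorem mainTheorem8:
  fixes I :: "('a::finite, 'k::field) ncpoly set"
    and \<delta> :: "'b::finite \<Rightarrow> nat"
    and M :: "('b \<Rightarrow> ('a,'k) ncpoly) set"
    and d :: nat
  assumes "graded_two_sided_ideal I"
    and "graded_right_submodule_pre I \<delta> M"
  shows "iota_Md_pre I \<delta> M d = Lcut_pre I \<delta> M d \<and>
         dim_mod nc_scale {m \<in> M. mod_homog \<delta> d m} {m. \<forall>i. m i \<in> I} =
         dim_mod lp_scale (Lcut_pre I \<delta> M d) {h. \<forall>i. h i \<in> lp_Kideal I}"
proof -
  interpret graded_submodule I \<delta> M
    using assms by unfold_locales
  show ?thesis
    using iota_Md_pre_eq_Lcut_pre card_indep_mod_Md_eq_Lcut_pre by (simp add: dim_mod_def)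
qed

end
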